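(* Let $(M,d)$ be a pointed metric space and let $\mu\in ba(\widetilde{M})$ with Jordan decomposition $\mu=\mu^+-\mu^-$. The following are equivalent: (i) $\|\Phi^*\mu\|=\|\mu\|$. (ii) For every $\gamma\in(0,1)$ there exist a subset $A\subseteq\widetilde M$ and $f\in B_{\mathrm{Lip}_0(M)}$ such that $\mu^+(A)+\mu^-(\mathfrak{r}(A))\geq \gamma|\mu|(\widetilde M)$ and $f(m_{x,y})\geq\gamma$ for all $(x,y)\in A$. (iii) For every $\gamma\in(0,1)$ there exists a $\gamma$-cyclically monotonic subset $A\subseteq\widetilde M$ with $\mu^+(A)+\mu^-(\mathfrak{r}(A))\geq\gamma|\mu|(\widetilde M)$.
   Context: $(M,d)$ is a metric space with base point $0$; $\mathrm{Lip}_0(M)$ is the real Banach space of Lipschitz $f\colon M\to\mathbb R$ with $f(0)=0$, normed by the best Lipschitz constant, with closed unit ball $B_{\mathrm{Lip}_0(M)}$. $\widetilde M=\{(x,y)\in M\times M: x\neq y\}$, and $f(m_{x,y})=(f(x)-f(y))/d(x,y)$ for $(x,y)\in\widetilde M$. $\mathfrak r\colon\widetilde M\to\widetilde M$ is $\mathfrak r(x,y)=(y,x)$. $ba(\widetilde M)$ is the Banach space of bounded finitely additive signed measures on the power set of $\widetilde M$ with norm $\|\mu\|=|\mu|(\widetilde M)$ (this is the dual of $\ell_\infty(\widetilde M)$). The de Leeuw map $\Phi\colon\mathrm{Lip}_0(M)\to\ell_\infty(\widetilde M)$ is $\Phi f(x,y)=(f(x)-f(y))/d(x,y)$, a linear isometry;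 its adjoint gives $\Phi^*\mu\in\mathrm{Lip}_0(M)^*$, $(\Phi^*\mu)(f)=\int_{\widetilde M}\Phi f\,d\mu$. For $\gamma\in(0,1]$, $A\subseteq\widetilde M$ is $\gamma$-cyclically monotonic if for every finite sequence $(x_1,y_1),\dots,(x_n,y_n)\in A$, with $y_{n+1}=y_1$, $\sum_{i=1}^n\min\{d(x_i,y_{i+1})-\gamma d(x_i,y_i),\,d(y_i,y_{i+1})\}\ge 0$. *)

theory Defs
  imports "HOL-Analysis.Analysis"
begin

definition Mtilde :: "('a::metric_space \<times> 'a) set" where
  "Mtilde = {(x, y). x \<noteq> y}"

definition flip_pair :: "'a \<times> 'b \<Rightarrow> 'b \<times> 'a" where
  "flip_pair = (\<lambda>(x, y). (y, x))"

text \<open>The de Leeuw transform: (Phi f)(x,y) = (f x - f y) / d(x,y) = f(m_{x,y}).\<close>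
definition deLeeuw :: "('a::metric_space \<Rightarrow> real) \<Rightarrow> 'a \<times> 'a \<Rightarrow> real" where
  "deLeeuw f = (\<lambda>(x, y). (f x - f y) / dist x y)"

definition Lip0_ball :: "'a::metric_space \<Rightarrow> ('a \<Rightarrow> real) set" where
  "Lip0_ball z0 = {f. f z0 = 0 \<and> (\<forall>x y. \<bar>f x - f y\<bar> \<le> dist x y)}"

text \<open>Bounded finitely additive signed measures on the power set of a set S
  (values of mu on sets not contained in S are irrelevant).\<close>
definition ba_measure :: "'b set \<Rightarrow> ('b set \<Rightarrow> real) \<Rightarrow> bool" where
  "ba_measure S \<mu> \<longleftrightarrow>
     (\<forall>A B. A \<subseteq> S \<longrightarrow> B \<subseteq> S \<longrightarrow> A \<inter> B = {} \<longrightarrow> \<mu> (A \<union> B) = \<mu> A + \<mu> B) \<and>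
     (\<exists>C. \<forall>A. A \<subseteq> S \<longrightarrow> \<bar>\<mu> A\<bar> \<le> C)"

definition fin_partition :: "'b set set \<Rightarrow> 'b set \<Rightarrow> bool" where
  "fin_partition P E \<longleftrightarrow> finite P \<and> \<Union>P = E \<and> {} \<notin> P \<and>
     (\<forall>A\<in>P. \<forall>B\<in>P. A \<noteq> B \<longrightarrow> A \<inter> B = {})"

definition total_variation :: "('b set \<Rightarrow> real) \<Rightarrow> 'b set \<Rightarrow> real" where
  "total_variation \<mu> E = Sup {(\<Sum>B\<in>P. \<bar>\<mu> B\<bar>) | P. fin_partition P E}"

definition pos_part :: "('b set \<Rightarrow> real) \<Rightarrow> 'b set \<Rightarrow> real" where
  "pos_part \<mu> E = Sup {\<mu> F | F. F \<subseteq> E}"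

definition neg_part :: "('b set \<Rightarrow> real) \<Rightarrow> 'b set \<Rightarrow> real" where
  "neg_part \<mu> E = Sup {- \<mu> F | F. F \<subseteq> E}"

definition ba_norm :: "'b set \<Rightarrow> ('b set \<Rightarrow> real) \<Rightarrow> real" where
  "ba_norm S \<mu> = total_variation \<mu> S"

text \<open>Integral of a bounded function g over S against a bounded finitely additive
  measure mu (Dunford--Schwartz integral), as the limit of Riemann--Stieltjes sums
  over finite partitions on whose blocks g oscillates little.\<close>
definition ba_integral :: "'b set \<Rightarrow> ('b set \<Rightarrow> real) \<Rightarrow> ('b \<Rightarrow> real) \<Rightarrow> real" where
  "ba_integral S \<mu> g = (THE I. \<forall>\<epsilon>>0. \<exists>\<delta>>0. \<forall>P t.
      fin_partition P S \<longrightarrow> (\<forall>B\<in>P. \<forall>u\<in>B. \<forall>v\<in>B. \<bar>g u - g v\<bar> \<le> \<delta>) \<longrightarrow>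
      (\<forall>B\<in>P. t B \<in> B) \<longrightarrow> \<bar>I - (\<Sum>B\<in>P. g (t B) * \<mu> B)\<bar> < \<epsilon>)"

definition dual_norm_Phi_star :: "'a::metric_space \<Rightarrow> (('a \<times> 'a) set \<Rightarrow> real) \<Rightarrow> real" where
  "dual_norm_Phi_star z0 \<mu> =
     Sup {\<bar>ba_integral Mtilde \<mu> (deLeeuw f)\<bar> | f. f \<in> Lip0_ball z0}"

definition cyc_monotone :: "real \<Rightarrow> ('a::metric_space \<times> 'a) set \<Rightarrow> bool" where
  "cyc_monotone \<gamma> A \<longleftrightarrow> A \<subseteq> Mtilde \<and>
     (\<forall>n::nat. \<forall>x y :: nat \<Rightarrow> 'a. n \<ge> 1 \<longrightarrow> (\<forall>i<n. (x i, y i) \<in> A) \<longrightarrow>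
        (\<Sum>i<n. min (dist (x i) (y ((i + 1) mod n)) - \<gamma> * dist (x i) (y i))
                     (dist (y i) (y ((i + 1) mod n)))) \<ge> 0)"

end

theory Submission
  imports Defs
begin

text \<open>
  Both sides of (i) are suprema: \<open>|\<mu>|(M\<^sup>~)\<close> over finite partitions, \<open>\<parallel>\<Phi>\<^sup>*\<mu>\<parallel>\<close> over
  integrals of de Leeuw transforms, and Riemann sums over partitions into pieces on which
  \<open>\<Phi>f\<close> is nearly constant link the two.  If \<open>\<Phi>f \<ge> \<gamma>\<close> on \<open>A\<close>, then \<open>\<Phi>f \<le> -\<gamma>\<close> on \<open>r(A)\<close>, and the
  blocks inside \<open>A\<close> and \<open>r(A)\<close> contribute at least \<open>2\<gamma>(\<mu>\<^sup>+(A) + \<mu>\<^sup>-(r(A))) - |\<mu>|(M\<^sup>~)\<close>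
  to \<open>\<integral>\<Phi>f d\<mu>\<close>; this gives (ii) \<Rightarrow> (i) as \<open>\<gamma> \<rightarrow> 1\<close>.  Conversely, splitting \<open>M\<^sup>~\<close> into
  \<open>{\<Phi>f \<ge> \<gamma>}\<close>, \<open>{\<Phi>f \<le> -\<gamma>}\<close> and the rest bounds \<open>\<integral>\<Phi>f d\<mu>\<close> by
  \<open>\<gamma>|\<mu>|(M\<^sup>~) + (1 - \<gamma>)(\<mu>\<^sup>+(A) + \<mu>\<^sup>-(r(A)))\<close> with \<open>A = {\<Phi>f \<ge> \<gamma>}\<close>, so an almost norming
  \<open>f\<close> yields (ii).  Finally, \<open>\<Phi>f \<ge> \<gamma>\<close> on \<open>A\<close> forces \<open>\<gamma>\<close>-cyclical monotonicity by
  telescoping \<open>f\<close> around a cycle, and conversely a \<open>\<gamma>\<close>-cyclically monotonic \<open>A\<close> carries the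
  Rockafellar-type potential \<open>f(p) = inf\<close> of the costs of chains in \<open>A\<close> from \<open>p\<close> to the base
  point, which is 1-Lipschitz and drops by at least \<open>\<gamma> d(x, y)\<close> along every pair of \<open>A\<close>.
\<close>

lemma le_of_forall_pos_le_add_mult:
  fixes x y c :: real
  assumes "0 \<le> c" "\<And>d. 0 < d \<Longrightarrow> x \<le> y + d * c"
  shows "x \<le> y"
proof (rule field_le_epsilon)
  fix e :: real assume "0 < e"
  then have "x \<le> y + e / (c + 1) * c"
    using assms by (intro assms(2)) simp
  moreover have "e / (c + 1) * c \<le> e"
    using assms(1) \<open>0 < e\<close> by (simp add: field_simps)
  ultimately show "x \<le> y + e"
    by linarith
qed

lemma twice_mult_minus_abs_le:
  fixes \<gamma> x a :: real
  assumes "0 \<le> \<gamma>" "\<gamma> \<le> x" "x \<le> 1"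
  shows "2 * \<gamma> * a - \<bar>a\<bar> \<le> x * a"
proof (cases "0 \<le> a")
  case True
  then have "\<gamma> * a \<le> x * a" "\<gamma> * a \<le> a"
    using assms by (simp_all add: mult_right_mono mult_left_le_one_le)
  then show ?thesis
    using True by simp
next
  case False
  have "1 * a \<le> x * a"
    using assms(3) False by (intro mult_right_mono_neg) simp_all
  moreover have "\<gamma> * a \<le> 0"
    using assms(1) False by (simp add: mult_nonneg_nonpos)
  ultimately show ?thesis
    using False by linarith
qed

lemma mult_le_abs_add_max:
  fixes \<gamma> x a :: real
  assumes "0 \<le> \<gamma>" "\<gamma> \<le> x" "x \<le> 1"
  shows "x * a \<le> \<gamma> * \<bar>a\<bar> + (1 - \<gamma>) * max a 0"
proof (cases "0 \<le> a")
  case True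
  then have "x * a \<le> 1 * a"
    using assms(3) by (rule mult_right_mono[rotated])
  then show ?thesis
    using True by (simp add: algebra_simps)
next
  case False
  have "x * a \<le> \<gamma> * a"
    using assms(2) False by (intro mult_right_mono_neg) simp_all
  moreover have "\<gamma> * a \<le> 0"
    using assms(1) False by (simp add: mult_nonneg_nonpos)
  ultimately show ?thesis
    using False by linarith
qed

lemma mult_le_abs_of_abs_le:
  fixes \<gamma> x a :: real
  assumes "\<bar>x\<bar> \<le> \<gamma>"
  shows "x * a \<le> \<gamma> * \<bar>a\<bar>"
proof -
  have "\<bar>x * a\<bar> \<le> \<gamma> * \<bar>a\<bar>"
    unfolding abs_mult using assms by (rule mult_right_mono) simp
  then show ?thesis
    by simp
qed

lemma block_lower_bound:
  fixes \<gamma> x a :: real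
  assumes "0 \<le> \<gamma>" "\<bar>x\<bar> \<le> 1" "p \<Longrightarrow> \<gamma> \<le> x" "q \<Longrightarrow> x \<le> - \<gamma>"
  shows "2 * \<gamma> * (((if p then 1 else 0) - (if q then 1 else 0)) * a) - \<bar>a\<bar> \<le> x * a"
proof -
  consider "p = q" | "p" "\<not> q" | "q" "\<not> p"
    by blast
  then show ?thesis
  proof cases
    case 1
    then show ?thesis
      using mult_le_abs_of_abs_le[of "- x" 1 a] assms(2) by simp
  next
    case 2
    then show ?thesis
      using twice_mult_minus_abs_le[of \<gamma> x a] assms(1-3) by (simp add: abs_le_iff)
  next
    case 3
    then show ?thesis
      using twice_mult_minus_abs_le[of \<gamma> "- x" "- a"] assms(1,2,4) by (simp add: abs_le_iff)
  qed
qed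

lemma block_upper_bound:
  fixes \<gamma> x a :: real
  assumes "0 < \<gamma>" "\<gamma> \<le> 1" "\<bar>x\<bar> \<le> 1"
  shows "x * a \<le> \<gamma> * \<bar>a\<bar>
    + (1 - \<gamma>) * ((if \<gamma> \<le> x then max a 0 else 0) + (if x \<le> - \<gamma> then max (- a) 0 else 0))"
proof -
  have "\<not> (\<gamma> \<le> x \<and> x \<le> - \<gamma>)"
    using assms(1) by linarith
  then consider "\<gamma> \<le> x" "\<not> x \<le> - \<gamma>" | "x \<le> - \<gamma>" "\<not> \<gamma> \<le> x" | "\<not> \<gamma> \<le> x" "\<not> x \<le> - \<gamma>"
    by blast
  then show ?thesis
  proof cases
    case 1
    then show ?thesis
      using mult_le_abs_add_max[of \<gamma> x a] assms by (simp add: abs_le_iff)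
  next
    case 2
    then show ?thesis
      using mult_le_abs_add_max[of \<gamma> "- x" "- a"] assms by (simp add: abs_le_iff)
  next
    case 3
    then have "\<bar>x\<bar> \<le> \<gamma>"
      by linarith
    with 3 show ?thesis
      by (simp add: mult_le_abs_of_abs_le)
  qed
qed

section \<open>Finite partitions and Riemann sums\<close>

lemma fin_partition_iff: "fin_partition P E \<longleftrightarrow> finite P \<and> partition_on E P"
  unfolding fin_partition_def partition_on_def disjoint_def by auto

lemma fin_partitionD:
  assumes "fin_partition P S"
  shows "finite P" "P \<subseteq> Pow S" "disjoint P" "\<Union>P = S" "{} \<notin> P"
  using assms unfolding fin_partition_def by (auto intro: disjointI)

lemma exists_tags:
  assumes "fin_partition P S"
  obtains t where "\<forall>B\<in>P. t B \<in> B"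
proof
  show "\<forall>B\<in>P. (SOME u. u \<in> B) \<in> B"
    using fin_partitionD(5)[OF assms] by (metis some_in_eq)
qed

definition fine_partition :: "'b set \<Rightarrow> ('b \<Rightarrow> real) \<Rightarrow> real \<Rightarrow> 'b set set \<Rightarrow> bool" where
  "fine_partition S g \<delta> P \<longleftrightarrow> fin_partition P S \<and> (\<forall>B\<in>P. \<forall>u\<in>B. \<forall>v\<in>B. \<bar>g u - g v\<bar> \<le> \<delta>)"

definition resolves :: "'b set set \<Rightarrow> 'b set \<Rightarrow> bool" where
  "resolves P Z \<longleftrightarrow> (\<forall>B\<in>P. B \<subseteq> Z \<or> B \<inter> Z = {})"

definition riemann_sum :: "('b set \<Rightarrow> real) \<Rightarrow> ('b \<Rightarrow> real) \<Rightarrow> 'b set set \<Rightarrow> ('b set \<Rightarrow> 'b) \<Rightarrow> real" where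
  "riemann_sum \<mu> g P t = (\<Sum>B\<in>P. g (t B) * \<mu> B)"

lemma ba_integral_alt:
  "ba_integral S \<mu> g = (THE I. \<forall>\<epsilon>>0. \<exists>\<delta>>0. \<forall>P t. fine_partition S g \<delta> P \<longrightarrow>
      (\<forall>B\<in>P. t B \<in> B) \<longrightarrow> \<bar>I - riemann_sum \<mu> g P t\<bar> < \<epsilon>)"
  unfolding ba_integral_def fine_partition_def riemann_sum_def by (simp add: imp_conjL)

lemma fine_partition_mono: "fine_partition S g \<delta> P \<Longrightarrow> \<delta> \<le> \<delta>' \<Longrightarrow> fine_partition S g \<delta>' P"
  unfolding fine_partition_def by force

lemma resolves_iff_tag_in:
  assumes "resolves P Z" "B \<in> P" "t B \<in> B"
  shows "B \<subseteq> Z \<longleftrightarrow> t B \<in> Z"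
  using assms unfolding resolves_def by blast

lemma exists_fine_partition:
  assumes "bounded (g ` S)" "0 < \<delta>"
  obtains P where "fine_partition S g \<delta> P"
proof
  obtain c where c: "\<And>u. u \<in> S \<Longrightarrow> \<bar>g u\<bar> \<le> c"
    using assms(1) unfolding bounded_real by blast
  define k where "k u = \<lfloor>g u / \<delta>\<rfloor>" for u
  define P where "P = (\<lambda>j. {u\<in>S. k u = j}) ` k ` S"
  have "k ` S \<subseteq> {\<lfloor>- c / \<delta>\<rfloor>..\<lfloor>c / \<delta>\<rfloor>}"
  proof
    fix j assume "j \<in> k ` S"
    then obtain u where "u \<in> S" "j = k u"
      by blast
    then have "- c \<le> g u" "g u \<le> c"
      using c[of u] by (simp_all add: abs_le_iff)
    then have "- c / \<delta> \<le> g u / \<delta>" "g u / \<delta> \<le> c / \<delta>"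
      using assms(2) by (simp_all only: divide_right_mono less_imp_le)
    then show "j \<in> {\<lfloor>- c / \<delta>\<rfloor>..\<lfloor>c / \<delta>\<rfloor>}"
      unfolding \<open>j = k u\<close> k_def by (simp add: floor_mono)
  qed
  then have "finite P"
    unfolding P_def by (meson finite_atLeastAtMost_int finite_imageI finite_subset)
  moreover have "\<bar>g u - g v\<bar> \<le> \<delta>" if "k u = k v" for u v
  proof -
    have "\<bar>g u / \<delta> - g v / \<delta>\<bar> \<le> 1"
      using that floor_correct[of "g u / \<delta>"] floor_correct[of "g v / \<delta>"]
      unfolding k_def by linarith
    then show ?thesis
      using assms(2) by (simp add: abs_le_iff field_simps)
  qed
  ultimately show "fine_partition S g \<delta> P"
    unfolding fine_partition_def fin_partition_def P_def by auto
qed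

lemma exists_tagged_fine_partition:
  assumes "bounded (g ` S)" "0 < \<delta>"
  obtains P t where "fine_partition S g \<delta> P" "\<forall>B\<in>P. t B \<in> B"
proof -
  obtain P where P: "fine_partition S g \<delta> P"
    using exists_fine_partition[OF assms] .
  then have "fin_partition P S"
    unfolding fine_partition_def by blast
  then obtain t where "\<forall>B\<in>P. t B \<in> B"
    by (rule exists_tags)
  with P show ?thesis
    using that by blast
qed

lemma fine_partition_refine:
  assumes "fine_partition S g \<delta> P"
  obtains P' where "fine_partition S g \<delta> P'" "resolves P' Z" "\<And>W. resolves P W \<Longrightarrow> resolves P' W"
proof
  define Q where "Q = {Z \<inter> S, S - Z} - {{}}"
  define P' where "P' = common_refinement {P, Q}"
  have P: "finite P" "partition_on S P" "\<forall>B\<in>P. \<forall>u\<in>B. \<forall>v\<in>B. \<bar>g u - g v\<bar> \<le> \<delta>"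
    using assms unfolding fine_partition_def fin_partition_iff by blast+
  have Q: "finite Q" "partition_on S Q"
    unfolding Q_def partition_on_def disjoint_def by auto
  have coarser: "\<exists>B\<in>P. X \<subseteq> B" "\<exists>C\<in>Q. X \<subseteq> C" if "X \<in> P'" for X
    using common_refinement_exists[OF that[unfolded P'_def]] by blast+
  show "fine_partition S g \<delta> P'"
    unfolding fine_partition_def fin_partition_iff
  proof (intro conjI ballI)
    show "finite P'"
      unfolding P'_def using P Q by (intro finite_common_refinement) auto
    show "partition_on S P'"
      unfolding P'_def using P Q by (intro partition_on_common_refinement) auto
    fix X u v assume "X \<in> P'" "u \<in> X" "v \<in> X"
    then obtain B where "B \<in> P" "u \<in> B" "v \<in> B"
      using coarser(1) by blast
    then show "\<bar>g u - g v\<bar> \<le> \<delta>"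
      using P(3) by blast
  qed
  show "resolves P' Z"
    unfolding resolves_def
  proof
    fix X assume "X \<in> P'"
    then obtain C where "C \<in> Q" "X \<subseteq> C"
      using coarser(2) by blast
    moreover have "C \<subseteq> Z \<or> C \<inter> Z = {}"
      using \<open>C \<in> Q\<close> unfolding Q_def by blast
    ultimately show "X \<subseteq> Z \<or> X \<inter> Z = {}"
      by blast
  qed
  show "resolves P' W" if "resolves P W" for W
    unfolding resolves_def
  proof
    fix X assume "X \<in> P'"
    then obtain B where "B \<in> P" "X \<subseteq> B"
      using coarser(1) by blast
    then show "X \<subseteq> W \<or> X \<inter> W = {}"
      using that unfolding resolves_def by blast
  qed
qed

lemma exists_tagged_fine_partition_resolving:
  assumes "bounded (g ` S)" "0 < \<delta>" "finite \<Z>"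
  obtains P t where "fine_partition S g \<delta> P" "\<forall>B\<in>P. t B \<in> B" "\<forall>Z\<in>\<Z>. resolves P Z"
proof -
  have "\<exists>P. fine_partition S g \<delta> P \<and> (\<forall>Z\<in>\<Z>. resolves P Z)"
    using assms(3)
  proof (induction rule: finite_induct)
    case empty
    then show ?case
      using exists_fine_partition[OF assms(1,2)] by blast
  next
    case (insert Z \<Z>)
    then obtain P where "fine_partition S g \<delta> P" "\<forall>W\<in>\<Z>. resolves P W"
      by blast
    then show ?case
      by (metis fine_partition_refine insert_iff)
  qed
  then obtain P where P: "fine_partition S g \<delta> P" "\<forall>Z\<in>\<Z>. resolves P Z"
    by blast
  then have "fin_partition P S"
    unfolding fine_partition_def by blast
  then obtain t where "\<forall>B\<in>P. t B \<in> B"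
    by (rule exists_tags)
  with P show ?thesis
    using that by blast
qed

lemma disjoint_family_on_Int_product:
  assumes "disjoint P" "disjoint Q"
  shows "disjoint_family_on (\<lambda>(B, C). B \<inter> C) (P \<times> Q)"
  unfolding disjoint_family_on_def
proof (intro ballI impI)
  fix p q assume "p \<in> P \<times> Q" "q \<in> P \<times> Q" "p \<noteq> q"
  then obtain B\<^sub>1 C\<^sub>1 B\<^sub>2 C\<^sub>2 where pq: "p = (B\<^sub>1, C\<^sub>1)" "q = (B\<^sub>2, C\<^sub>2)"
    and "B\<^sub>1 \<in> P" "C\<^sub>1 \<in> Q" "B\<^sub>2 \<in> P" "C\<^sub>2 \<in> Q" "B\<^sub>1 \<noteq> B\<^sub>2 \<or> C\<^sub>1 \<noteq> C\<^sub>2"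
    by auto
  then have "B\<^sub>1 \<inter> B\<^sub>2 = {} \<or> C\<^sub>1 \<inter> C\<^sub>2 = {}"
    using disjointD[OF assms(1)] disjointD[OF assms(2)] by blast
  then show "(case p of (B, C) \<Rightarrow> B \<inter> C) \<inter> (case q of (B, C) \<Rightarrow> B \<inter> C) = {}"
    unfolding pq by blast
qed

section \<open>Bounded charges\<close>

lemma neg_part_eq_pos_part_uminus: "neg_part \<mu> A = pos_part (\<lambda>F. - \<mu> F) A"
  by (simp add: neg_part_def pos_part_def)

locale bounded_charge =
  fixes S :: "'b set" and \<mu> :: "'b set \<Rightarrow> real"
  assumes ba_measure: "ba_measure S \<mu>"
begin

lemma additive: "A \<subseteq> S \<Longrightarrow> B \<subseteq> S \<Longrightarrow> A \<inter> B = {} \<Longrightarrow> \<mu> (A \<union> B) = \<mu> A + \<mu> B"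
  using ba_measure unfolding ba_measure_def by blast

lemma empty [simp]: "\<mu> {} = 0"
  using additive[of "{}" "{}"] by simp

lemma bounded: obtains C where "\<And>A. A \<subseteq> S \<Longrightarrow> \<bar>\<mu> A\<bar> \<le> C"
  using ba_measure unfolding ba_measure_def by blast

lemma uminus: "bounded_charge S (\<lambda>A. - \<mu> A)"
  using ba_measure unfolding bounded_charge_def ba_measure_def by simp

lemma finitely_additive:
  assumes "finite I" "\<And>i. i \<in> I \<Longrightarrow> D i \<subseteq> S" "disjoint_family_on D I"
  shows "\<mu> (\<Union>i\<in>I. D i) = (\<Sum>i\<in>I. \<mu> (D i))"
  using assms
proof (induction I rule: finite_induct)
  case (insert i I)
  have "\<mu> (\<Union>j\<in>insert i I. D j) = \<mu> (D i \<union> (\<Union>j\<in>I. D j))"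
    by simp
  also have "\<dots> = \<mu> (D i) + \<mu> (\<Union>j\<in>I. D j)"
    using insert.prems insert.hyps(2)
    by (intro additive) (auto simp: disjoint_family_on_def)
  also have "\<mu> (\<Union>j\<in>I. D j) = (\<Sum>j\<in>I. \<mu> (D j))"
    using insert.prems by (intro insert.IH) (auto simp: disjoint_family_on_def)
  finally show ?case
    using insert.hyps by simp
qed simp

lemma finitely_additive_sets:
  assumes "finite \<D>" "\<D> \<subseteq> Pow S" "disjoint \<D>"
  shows "\<mu> (\<Union>\<D>) = (\<Sum>B\<in>\<D>. \<mu> B)"
proof -
  have "disjoint_family_on id \<D>"
    unfolding disjoint_family_on_def using disjointD[OF assms(3)] by simp
  then show ?thesis
    using finitely_additive[of \<D> id] assms(1,2) by auto
qed

lemma eq_sum_Int_partition: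
  assumes "fin_partition Q S" "B \<subseteq> S"
  shows "\<mu> B = (\<Sum>C\<in>Q. \<mu> (B \<inter> C))"
proof -
  have "B = (\<Union>C\<in>Q. B \<inter> C)"
    using assms unfolding fin_partition_def by auto
  moreover have "\<mu> (\<Union>C\<in>Q. B \<inter> C) = (\<Sum>C\<in>Q. \<mu> (B \<inter> C))"
    using assms by (intro finitely_additive) (auto simp: fin_partition_def disjoint_family_on_def)
  ultimately show ?thesis
    by simp
qed

lemma sum_abs_le_twice_bound:
  assumes "finite \<D>" "\<D> \<subseteq> Pow S" "disjoint \<D>" and C: "\<And>A. A \<subseteq> S \<Longrightarrow> \<bar>\<mu> A\<bar> \<le> C"
  shows "(\<Sum>B\<in>\<D>. \<bar>\<mu> B\<bar>) \<le> 2 * C"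
proof -
  define Dpos where "Dpos = \<D> \<inter> {B. 0 \<le> \<mu> B}"
  define Dneg where "Dneg = \<D> - {B. 0 \<le> \<mu> B}"
  have sub: "Dpos \<subseteq> \<D>" "Dneg \<subseteq> \<D>"
    unfolding Dpos_def Dneg_def by auto
  have "(\<Sum>B\<in>\<D>. \<bar>\<mu> B\<bar>) = (\<Sum>B\<in>Dpos. \<mu> B) - (\<Sum>B\<in>Dneg. \<mu> B)"
    using sum.Int_Diff[OF assms(1), of "\<lambda>B. \<bar>\<mu> B\<bar>" "{B. 0 \<le> \<mu> B}"]
    unfolding Dpos_def Dneg_def by (simp add: sum_negf[symmetric])
  also have "\<dots> = \<mu> (\<Union>Dpos) - \<mu> (\<Union>Dneg)"
    using sub assms(1-3)
    by (simp add: finitely_additive_sets finite_subset pairwise_subset)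
  also have "\<dots> \<le> 2 * C"
  proof -
    have "\<Union>Dpos \<subseteq> S" "\<Union>Dneg \<subseteq> S"
      using sub assms(2) by auto
    then show ?thesis
      using C[of "\<Union>Dpos"] C[of "\<Union>Dneg"] unfolding abs_le_iff by linarith
  qed
  finally show ?thesis .
qed

lemma total_variation_bdd: "bdd_above {(\<Sum>B\<in>P. \<bar>\<mu> B\<bar>) | P. fin_partition P S}"
proof -
  obtain C where "\<And>A. A \<subseteq> S \<Longrightarrow> \<bar>\<mu> A\<bar> \<le> C"
    using bounded by blast
  then have "(\<Sum>B\<in>P. \<bar>\<mu> B\<bar>) \<le> 2 * C" if "fin_partition P S" for P
    using sum_abs_le_twice_bound[OF fin_partitionD(1-3)[OF that]] by blast
  then show ?thesis
    by (intro bdd_aboveI[of _ "2 * C"]) blast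
qed

lemma sum_abs_le_total_variation:
  assumes "finite \<D>" "\<D> \<subseteq> Pow S" "disjoint \<D>"
  shows "(\<Sum>B\<in>\<D>. \<bar>\<mu> B\<bar>) \<le> total_variation \<mu> S"
proof -
  define P where "P = insert (S - \<Union>\<D>) \<D> - {{}}"
  have P: "fin_partition P S"
    unfolding fin_partition_def
  proof (intro conjI ballI impI)
    show "finite P" "{} \<notin> P"
      using assms(1) by (simp_all add: P_def)
    have "\<Union>\<D> \<subseteq> S" "\<Union>(\<A> - {{}}) = \<Union>\<A>" for \<A> :: "'b set set"
      using assms(2) by auto
    then show "\<Union>P = S"
      by (simp add: P_def Un_absorb2)
    show "A \<inter> B = {}" if AB: "A \<in> P" "B \<in> P" "A \<noteq> B" for A B
    proof -
      consider "A \<in> \<D>" "B \<in> \<D>" | "A = S - \<Union>\<D>" "B \<in> \<D>" | "A \<in> \<D>" "B = S - \<Union>\<D>"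
        using AB by (auto simp: P_def)
      then show ?thesis
        by cases (use disjointD[OF assms(3)] AB(3) in blast)+
    qed
  qed
  have "(\<Sum>B\<in>\<D>. \<bar>\<mu> B\<bar>) = (\<Sum>B\<in>\<D> - {{}}. \<bar>\<mu> B\<bar>)"
    using assms(1) by (intro sum.mono_neutral_right) auto
  also have "\<dots> \<le> (\<Sum>B\<in>P. \<bar>\<mu> B\<bar>)"
    using fin_partitionD(1)[OF P] by (intro sum_mono2) (auto simp: P_def)
  also have "\<dots> \<le> total_variation \<mu> S"
    unfolding total_variation_def using P by (intro cSup_upper total_variation_bdd) blast
  finally show ?thesis .
qed

lemma sum_abs_family_le_total_variation:
  assumes "finite I" "\<And>i. i \<in> I \<Longrightarrow> D i \<subseteq> S" "disjoint_family_on D I"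
  shows "(\<Sum>i\<in>I. \<bar>\<mu> (D i)\<bar>) \<le> total_variation \<mu> S"
proof -
  have "(\<Sum>B\<in>D ` I. \<bar>\<mu> B\<bar>) = sum ((\<lambda>B. \<bar>\<mu> B\<bar>) \<circ> D) I"
  proof (rule sum.reindex_nontrivial[OF assms(1)])
    fix i j assume "i \<in> I" "j \<in> I" "i \<noteq> j" "D i = D j"
    then have "D i = {}"
      using assms(3) unfolding disjoint_family_on_def by force
    then show "\<bar>\<mu> (D i)\<bar> = 0"
      by simp
  qed
  moreover have "(\<Sum>B\<in>D ` I. \<bar>\<mu> B\<bar>) \<le> total_variation \<mu> S"
    using assms by (intro sum_abs_le_total_variation disjoint_family_on_disjoint_image) auto
  ultimately show ?thesis
    by (simp add: comp_def)
qed

lemma total_variation_nonneg: "0 \<le> total_variation \<mu> S"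
  using sum_abs_le_total_variation[of "{}"] by simp

lemma pos_part_bdd:
  assumes "A \<subseteq> S"
  shows "bdd_above {\<mu> F | F. F \<subseteq> A}"
proof -
  obtain C where C: "\<And>A. A \<subseteq> S \<Longrightarrow> \<bar>\<mu> A\<bar> \<le> C"
    using bounded by blast
  have "\<mu> F \<le> C" if "F \<subseteq> A" for F
  proof -
    have "\<bar>\<mu> F\<bar> \<le> C"
      using that assms by (intro C) blast
    then show ?thesis
      by (rule abs_le_D1)
  qed
  then show ?thesis
    by (intro bdd_aboveI) blast
qed

lemma le_pos_part: "F \<subseteq> A \<Longrightarrow> A \<subseteq> S \<Longrightarrow> \<mu> F \<le> pos_part \<mu> A"
  unfolding pos_part_def by (rule cSup_upper[OF _ pos_part_bdd]) auto

lemma pos_part_le: "(\<And>F. F \<subseteq> A \<Longrightarrow> \<mu> F \<le> c) \<Longrightarrow> pos_part \<mu> A \<le> c"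
  unfolding pos_part_def by (rule cSup_least) auto

lemma pos_part_nonneg: "A \<subseteq> S \<Longrightarrow> 0 \<le> pos_part \<mu> A"
  using le_pos_part[of "{}" A] by simp

lemma sum_max_le_pos_part:
  assumes "finite \<D>" "disjoint \<D>" "\<D> \<subseteq> Pow A" "A \<subseteq> S"
  shows "(\<Sum>B\<in>\<D>. max (\<mu> B) 0) \<le> pos_part \<mu> A"
proof -
  define \<D>' where "\<D>' = {B\<in>\<D>. 0 < \<mu> B}"
  have sub: "\<D>' \<subseteq> \<D>"
    unfolding \<D>'_def by blast
  have "(\<Sum>B\<in>\<D>. max (\<mu> B) 0) = (\<Sum>B\<in>\<D>. if 0 < \<mu> B then \<mu> B else 0)"
    by (intro sum.cong) auto
  also have "\<dots> = (\<Sum>B\<in>\<D>'. \<mu> B)"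
    unfolding \<D>'_def by (rule sum.inter_filter[symmetric, OF assms(1)])
  also have "\<dots> = \<mu> (\<Union>\<D>')"
    using sub assms by (intro finitely_additive_sets[symmetric] finite_subset[OF sub] pairwise_subset[OF assms(2)]) blast+
  also have "\<dots> \<le> pos_part \<mu> A"
    using sub assms(3,4) by (intro le_pos_part) blast+
  finally show ?thesis .
qed

lemma pos_part_add_neg_part_le:
  assumes "\<And>F G. F \<subseteq> A \<Longrightarrow> G \<subseteq> B \<Longrightarrow> \<mu> F - \<mu> G \<le> c"
  shows "pos_part \<mu> A + neg_part \<mu> B \<le> c"
proof -
  have "pos_part \<mu> A \<le> c + \<mu> G" if "G \<subseteq> B" for G
    using assms[OF _ that] by (intro pos_part_le) (simp add: algebra_simps)
  then have "neg_part \<mu> B \<le> c - pos_part \<mu> A"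
    unfolding neg_part_eq_pos_part_uminus
    by (intro bounded_charge.pos_part_le[OF uminus]) (simp add: algebra_simps)
  then show ?thesis
    by simp
qed

lemma neg_part_nonneg: "A \<subseteq> S \<Longrightarrow> 0 \<le> neg_part \<mu> A"
  unfolding neg_part_eq_pos_part_uminus by (rule bounded_charge.pos_part_nonneg[OF uminus])

lemma sum_max_le_neg_part:
  assumes "finite \<D>" "disjoint \<D>" "\<D> \<subseteq> Pow A" "A \<subseteq> S"
  shows "(\<Sum>B\<in>\<D>. max (- \<mu> B) 0) \<le> neg_part \<mu> A"
  unfolding neg_part_eq_pos_part_uminus using assms by (rule bounded_charge.sum_max_le_pos_part[OF uminus])

lemma sum_abs_partition_le:
  "fin_partition P S \<Longrightarrow> (\<Sum>B\<in>P. \<bar>\<mu> B\<bar>) \<le> total_variation \<mu> S"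
  by (rule sum_abs_le_total_variation[OF fin_partitionD(1-3)])

lemma sum_abs_Int_partitions_le:
  assumes "fin_partition P S" "fin_partition Q S"
  shows "(\<Sum>(B, C)\<in>P \<times> Q. \<bar>\<mu> (B \<inter> C)\<bar>) \<le> total_variation \<mu> S"
proof -
  have "disjoint_family_on (\<lambda>(B, C). B \<inter> C) (P \<times> Q)"
    using fin_partitionD(3)[OF assms(1)] fin_partitionD(3)[OF assms(2)]
    by (rule disjoint_family_on_Int_product)
  moreover have "(\<lambda>(B, C). B \<inter> C) p \<subseteq> S" if "p \<in> P \<times> Q" for p
    using that fin_partitionD(2)[OF assms(1)] by auto
  ultimately have "(\<Sum>p\<in>P \<times> Q. \<bar>\<mu> ((\<lambda>(B, C). B \<inter> C) p)\<bar>) \<le> total_variation \<mu> S"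
    using fin_partitionD(1)[OF assms(1)] fin_partitionD(1)[OF assms(2)]
    by (intro sum_abs_family_le_total_variation) auto
  then show ?thesis
    by (simp add: case_prod_unfold)
qed

lemma riemann_sum_Int_partition:
  assumes "fin_partition P S" "fin_partition Q S"
  shows "riemann_sum \<mu> g P t = (\<Sum>B\<in>P. \<Sum>C\<in>Q. g (t B) * \<mu> (B \<inter> C))"
  unfolding riemann_sum_def
proof (rule sum.cong[OF refl])
  fix B assume "B \<in> P"
  then have "B \<subseteq> S"
    using fin_partitionD(2)[OF assms(1)] by blast
  then show "g (t B) * \<mu> B = (\<Sum>C\<in>Q. g (t B) * \<mu> (B \<inter> C))"
    using eq_sum_Int_partition[OF assms(2)] by (simp add: sum_distrib_left)
qed

lemma riemann_sum_diff_le: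
  assumes P: "fine_partition S g \<delta> P" "\<forall>B\<in>P. t B \<in> B"
    and Q: "fine_partition S g \<delta>' Q" "\<forall>C\<in>Q. s C \<in> C"
    and "0 \<le> \<delta>" "0 \<le> \<delta>'"
  shows "\<bar>riemann_sum \<mu> g P t - riemann_sum \<mu> g Q s\<bar> \<le> (\<delta> + \<delta>') * total_variation \<mu> S"
proof -
  have P': "fin_partition P S" and Q': "fin_partition Q S"
    using P(1) Q(1) unfolding fine_partition_def by blast+
  have "riemann_sum \<mu> g Q s = (\<Sum>B\<in>P. \<Sum>C\<in>Q. g (s C) * \<mu> (B \<inter> C))"
    unfolding riemann_sum_Int_partition[OF Q' P'] by (simp add: sum.swap[of _ P Q] Int_commute)
  then have "riemann_sum \<mu> g P t - riemann_sum \<mu> g Q s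
      = (\<Sum>(B, C)\<in>P \<times> Q. (g (t B) - g (s C)) * \<mu> (B \<inter> C))"
    unfolding riemann_sum_Int_partition[OF P' Q']
    by (simp add: sum.cartesian_product case_prod_unfold left_diff_distrib sum_subtractf)
  also have "\<bar>\<dots>\<bar> \<le> (\<Sum>(B, C)\<in>P \<times> Q. (\<delta> + \<delta>') * \<bar>\<mu> (B \<inter> C)\<bar>)"
  proof (rule order_trans[OF sum_abs sum_mono], clarify)
    fix B C assume BC: "B \<in> P" "C \<in> Q"
    show "\<bar>(g (t B) - g (s C)) * \<mu> (B \<inter> C)\<bar> \<le> (\<delta> + \<delta>') * \<bar>\<mu> (B \<inter> C)\<bar>"
    proof (cases "B \<inter> C = {}")
      case False
      then obtain u where "u \<in> B" "u \<in> C"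
        by blast
      then have "\<bar>g (t B) - g u\<bar> \<le> \<delta>" "\<bar>g u - g (s C)\<bar> \<le> \<delta>'"
        using P Q BC unfolding fine_partition_def by auto
      then have "\<bar>g (t B) - g (s C)\<bar> \<le> \<delta> + \<delta>'"
        unfolding abs_le_iff by linarith
      then show ?thesis
        unfolding abs_mult by (rule mult_right_mono) simp
    qed simp
  qed
  also have "\<dots> = (\<delta> + \<delta>') * (\<Sum>(B, C)\<in>P \<times> Q. \<bar>\<mu> (B \<inter> C)\<bar>)"
    by (simp add: sum_distrib_left case_prod_beta)
  also have "\<dots> \<le> (\<delta> + \<delta>') * total_variation \<mu> S"
    using sum_abs_Int_partitions_le[OF P' Q'] assms(5,6) by (simp add: mult_left_mono)
  finally show ?thesis .
qed

section \<open>The integral against a bounded charge\<close>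

lemma ba_integral_eqI:
  assumes "bounded (g ` S)"
    and L: "\<And>\<delta> P t. 0 < \<delta> \<Longrightarrow> fine_partition S g \<delta> P \<Longrightarrow> \<forall>B\<in>P. t B \<in> B \<Longrightarrow>
      \<bar>L - riemann_sum \<mu> g P t\<bar> \<le> \<delta> * total_variation \<mu> S"
  shows "ba_integral S \<mu> g = L"
  unfolding ba_integral_alt
proof (rule the_equality)
  let ?V = "total_variation \<mu> S"
  show "\<forall>\<epsilon>>0. \<exists>\<delta>>0. \<forall>P t. fine_partition S g \<delta> P \<longrightarrow> (\<forall>B\<in>P. t B \<in> B) \<longrightarrow>
      \<bar>L - riemann_sum \<mu> g P t\<bar> < \<epsilon>"
  proof (intro allI impI)
    fix \<epsilon> :: real assume "0 < \<epsilon>"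
    define \<delta> where "\<delta> = \<epsilon> / (?V + 1)"
    have "0 < \<delta>" "\<delta> * ?V < \<epsilon>"
      using \<open>0 < \<epsilon>\<close> total_variation_nonneg by (simp_all add: \<delta>_def field_simps)
    then show "\<exists>\<delta>>0. \<forall>P t. fine_partition S g \<delta> P \<longrightarrow> (\<forall>B\<in>P. t B \<in> B) \<longrightarrow>
        \<bar>L - riemann_sum \<mu> g P t\<bar> < \<epsilon>"
      using L by (blast intro: le_less_trans)
  qed
  fix I
  assume I: "\<forall>\<epsilon>>0. \<exists>\<delta>>0. \<forall>P t. fine_partition S g \<delta> P \<longrightarrow> (\<forall>B\<in>P. t B \<in> B) \<longrightarrow>
      \<bar>I - riemann_sum \<mu> g P t\<bar> < \<epsilon>"
  have close: "\<bar>I - L\<bar> \<le> 0 + d * (1 + ?V)" if "0 < d" for d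
  proof -
    obtain \<delta> where "0 < \<delta>" and \<delta>: "\<forall>P t. fine_partition S g \<delta> P \<longrightarrow> (\<forall>B\<in>P. t B \<in> B) \<longrightarrow>
        \<bar>I - riemann_sum \<mu> g P t\<bar> < d"
      using I \<open>0 < d\<close> by blast
    have "0 < min \<delta> d"
      using \<open>0 < \<delta>\<close> \<open>0 < d\<close> by simp
    then obtain P t where P: "fine_partition S g (min \<delta> d) P" and t: "\<forall>B\<in>P. t B \<in> B"
      by (rule exists_tagged_fine_partition[OF assms(1)])
    have "fine_partition S g \<delta> P"
      by (rule fine_partition_mono[OF P]) simp
    then have "\<bar>I - riemann_sum \<mu> g P t\<bar> < d"
      using \<delta> t by simp
    moreover have "\<bar>L - riemann_sum \<mu> g P t\<bar> \<le> min \<delta> d * ?V"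
      by (rule L[OF \<open>0 < min \<delta> d\<close> P t])
    moreover have "min \<delta> d * ?V \<le> d * ?V"
      by (intro mult_right_mono total_variation_nonneg) simp
    ultimately show ?thesis
      unfolding abs_le_iff abs_less_iff distrib_left by linarith
  qed
  have "\<bar>I - L\<bar> \<le> 0"
    by (rule le_of_forall_pos_le_add_mult[OF _ close]) (use total_variation_nonneg in simp)
  then show "I = L"
    by simp
qed

text \<open>The limit of the Riemann sums is the supremum of their lower estimates
  \<open>riemann_sum \<mu> g Q s - \<delta> |\<mu>|(S)\<close>.\<close>

lemma riemann_sums_converge:
  assumes "bounded (g ` S)"
  obtains L where "\<And>\<delta> P t. 0 < \<delta> \<Longrightarrow> fine_partition S g \<delta> P \<Longrightarrow> \<forall>B\<in>P. t B \<in> B \<Longrightarrow>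
      \<bar>L - riemann_sum \<mu> g P t\<bar> \<le> \<delta> * total_variation \<mu> S"
proof -
  let ?V = "total_variation \<mu> S"
  define X where "X = {riemann_sum \<mu> g Q s - \<delta> * ?V | \<delta> Q s.
    0 < \<delta> \<and> fine_partition S g \<delta> Q \<and> (\<forall>C\<in>Q. s C \<in> C)}"
  have in_X: "riemann_sum \<mu> g Q s - \<delta> * ?V \<in> X"
    if "0 < \<delta>" "fine_partition S g \<delta> Q" "\<forall>C\<in>Q. s C \<in> C" for \<delta> Q s
    unfolding X_def using that by blast
  obtain Q s where "fine_partition S g 1 Q" "\<forall>C\<in>Q. s C \<in> C"
    using exists_tagged_fine_partition[OF assms zero_less_one] .
  then have "X \<noteq> {}"
    using in_X[OF zero_less_one] by blast
  have "\<bar>Sup X - riemann_sum \<mu> g P t\<bar> \<le> \<delta> * ?V"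
    if P: "0 < \<delta>" "fine_partition S g \<delta> P" "\<forall>B\<in>P. t B \<in> B" for \<delta> P t
  proof -
    have near: "\<bar>riemann_sum \<mu> g P t - riemann_sum \<mu> g Q s\<bar> \<le> (\<delta> + \<delta>') * ?V"
      if "0 < \<delta>'" "fine_partition S g \<delta>' Q" "\<forall>C\<in>Q. s C \<in> C" for \<delta>' Q s
      using P that by (intro riemann_sum_diff_le) simp_all
    have upper: "x \<le> riemann_sum \<mu> g P t + \<delta> * ?V" if "x \<in> X" for x
    proof -
      obtain \<delta>' Q s where x: "x = riemann_sum \<mu> g Q s - \<delta>' * ?V"
        and Q: "0 < \<delta>'" "fine_partition S g \<delta>' Q" "\<forall>C\<in>Q. s C \<in> C"
        using \<open>x \<in> X\<close> unfolding X_def by blast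
      show ?thesis
        using near[OF Q] unfolding x abs_le_iff distrib_right by linarith
    qed
    have lower: "riemann_sum \<mu> g P t - \<delta> * ?V \<le> Sup X + d * (2 * ?V)" if "0 < d" for d
    proof -
      obtain Q s where Q: "fine_partition S g d Q" "\<forall>C\<in>Q. s C \<in> C"
        using exists_tagged_fine_partition[OF assms \<open>0 < d\<close>] .
      have "riemann_sum \<mu> g Q s - d * ?V \<le> Sup X"
        using in_X[OF \<open>0 < d\<close> Q] by (rule cSup_upper) (use upper in \<open>rule bdd_aboveI\<close>)
      then show ?thesis
        using near[OF \<open>0 < d\<close> Q] unfolding abs_le_iff distrib_right by linarith
    qed
    have "Sup X \<le> riemann_sum \<mu> g P t + \<delta> * ?V"
      using \<open>X \<noteq> {}\<close> upper by (rule cSup_least)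
    moreover have "riemann_sum \<mu> g P t - \<delta> * ?V \<le> Sup X"
      by (rule le_of_forall_pos_le_add_mult[OF _ lower]) (use total_variation_nonneg in simp)
    ultimately show ?thesis
      unfolding abs_le_iff by linarith
  qed
  then show ?thesis
    by (rule that)
qed

lemma ba_integral_approx:
  assumes "bounded (g ` S)" "0 < \<delta>" "fine_partition S g \<delta> P" "\<forall>B\<in>P. t B \<in> B"
  shows "\<bar>ba_integral S \<mu> g - riemann_sum \<mu> g P t\<bar> \<le> \<delta> * total_variation \<mu> S"
proof -
  obtain L where L: "\<And>\<delta> P t. 0 < \<delta> \<Longrightarrow> fine_partition S g \<delta> P \<Longrightarrow> \<forall>B\<in>P. t B \<in> B \<Longrightarrow>
      \<bar>L - riemann_sum \<mu> g P t\<bar> \<le> \<delta> * total_variation \<mu> S"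
    using riemann_sums_converge[OF assms(1)] by blast
  then have "ba_integral S \<mu> g = L"
    by (rule ba_integral_eqI[OF assms(1)])
  then show ?thesis
    using L[OF assms(2-4)] by simp
qed

lemma ba_integral_ge:
  assumes "bounded (g ` S)" "finite \<Z>"
    and "\<And>P t. fin_partition P S \<Longrightarrow> \<forall>B\<in>P. t B \<in> B \<Longrightarrow> \<forall>Z\<in>\<Z>. resolves P Z \<Longrightarrow>
      c \<le> riemann_sum \<mu> g P t"
  shows "c \<le> ba_integral S \<mu> g"
proof (rule le_of_forall_pos_le_add_mult[OF total_variation_nonneg])
  fix d :: real assume "0 < d"
  obtain P t where P: "fine_partition S g d P" "\<forall>B\<in>P. t B \<in> B" "\<forall>Z\<in>\<Z>. resolves P Z"
    using exists_tagged_fine_partition_resolving[OF assms(1) \<open>0 < d\<close> assms(2)] .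
  then have "c \<le> riemann_sum \<mu> g P t"
    using assms(3) unfolding fine_partition_def by blast
  moreover have "\<bar>ba_integral S \<mu> g - riemann_sum \<mu> g P t\<bar> \<le> d * total_variation \<mu> S"
    by (rule ba_integral_approx[OF assms(1) \<open>0 < d\<close> P(1,2)])
  ultimately show "c \<le> ba_integral S \<mu> g + d * total_variation \<mu> S"
    unfolding abs_le_iff by linarith
qed

lemma ba_integral_le:
  assumes "bounded (g ` S)" "finite \<Z>"
    and "\<And>P t. fin_partition P S \<Longrightarrow> \<forall>B\<in>P. t B \<in> B \<Longrightarrow> \<forall>Z\<in>\<Z>. resolves P Z \<Longrightarrow>
      riemann_sum \<mu> g P t \<le> c"
  shows "ba_integral S \<mu> g \<le> c"
proof (rule le_of_forall_pos_le_add_mult[OF total_variation_nonneg])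
  fix d :: real assume "0 < d"
  obtain P t where P: "fine_partition S g d P" "\<forall>B\<in>P. t B \<in> B" "\<forall>Z\<in>\<Z>. resolves P Z"
    using exists_tagged_fine_partition_resolving[OF assms(1) \<open>0 < d\<close> assms(2)] .
  then have "riemann_sum \<mu> g P t \<le> c"
    using assms(3) unfolding fine_partition_def by blast
  moreover have "\<bar>ba_integral S \<mu> g - riemann_sum \<mu> g P t\<bar> \<le> d * total_variation \<mu> S"
    by (rule ba_integral_approx[OF assms(1) \<open>0 < d\<close> P(1,2)])
  ultimately show "ba_integral S \<mu> g \<le> c + d * total_variation \<mu> S"
    unfolding abs_le_iff by linarith
qed

lemma ba_integral_uminus:
  assumes "bounded (g ` S)"
  shows "ba_integral S \<mu> (\<lambda>u. - g u) = - ba_integral S \<mu> g"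
proof (rule ba_integral_eqI)
  show "bounded ((\<lambda>u. - g u) ` S)"
    using assms unfolding bounded_real by simp
  fix \<delta> P t assume "0 < \<delta>" "fine_partition S (\<lambda>u. - g u) \<delta> P" "\<forall>B\<in>P. t B \<in> B"
  moreover have "fine_partition S (\<lambda>u. - g u) \<delta> P \<longleftrightarrow> fine_partition S g \<delta> P"
    unfolding fine_partition_def by (simp add: abs_minus_commute)
  ultimately have "\<bar>ba_integral S \<mu> g - riemann_sum \<mu> g P t\<bar> \<le> \<delta> * total_variation \<mu> S"
    using ba_integral_approx[OF assms] by blast
  then show "\<bar>- ba_integral S \<mu> g - riemann_sum \<mu> (\<lambda>u. - g u) P t\<bar> \<le> \<delta> * total_variation \<mu> S"
    unfolding riemann_sum_def by (simp add: sum_negf abs_minus_commute)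
qed

lemma abs_ba_integral_le:
  assumes "\<forall>u\<in>S. \<bar>g u\<bar> \<le> 1"
  shows "\<bar>ba_integral S \<mu> g\<bar> \<le> total_variation \<mu> S"
proof -
  have bounded: "bounded (g ` S)"
    using assms unfolding bounded_real by blast
  have sum_le: "\<bar>riemann_sum \<mu> g P t\<bar> \<le> total_variation \<mu> S"
    if "fin_partition P S" "\<forall>B\<in>P. t B \<in> B" for P t
  proof -
    have "\<bar>riemann_sum \<mu> g P t\<bar> \<le> (\<Sum>B\<in>P. \<bar>g (t B)\<bar> * \<bar>\<mu> B\<bar>)"
      unfolding riemann_sum_def abs_mult[symmetric] by (rule sum_abs)
    also have "\<dots> \<le> (\<Sum>B\<in>P. \<bar>\<mu> B\<bar>)"
    proof (rule sum_mono)
      fix B assume "B \<in> P"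
      then have "\<bar>g (t B)\<bar> \<le> 1"
        using that fin_partitionD(2)[OF that(1)] assms by blast
      then show "\<bar>g (t B)\<bar> * \<bar>\<mu> B\<bar> \<le> \<bar>\<mu> B\<bar>"
        by (simp add: mult_left_le_one_le)
    qed
    also have "\<dots> \<le> total_variation \<mu> S"
      by (rule sum_abs_partition_le[OF that(1)])
    finally show ?thesis .
  qed
  have "- total_variation \<mu> S \<le> ba_integral S \<mu> g"
  proof (rule ba_integral_ge[OF bounded finite.emptyI])
    fix P t assume "fin_partition P S" "\<forall>B\<in>P. t B \<in> B"
    then show "- total_variation \<mu> S \<le> riemann_sum \<mu> g P t"
      using sum_le[of P t] by (simp add: abs_le_iff)
  qed
  moreover have "ba_integral S \<mu> g \<le> total_variation \<mu> S"
  proof (rule ba_integral_le[OF bounded finite.emptyI])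
    fix P t assume "fin_partition P S" "\<forall>B\<in>P. t B \<in> B"
    then show "riemann_sum \<mu> g P t \<le> total_variation \<mu> S"
      using sum_le[of P t] by (simp add: abs_le_iff)
  qed
  ultimately show ?thesis
    by simp
qed

lemma sum_blocks_inside:
  assumes "fin_partition P S" "resolves P Z" "Z \<subseteq> S"
  shows "(\<Sum>B\<in>{B\<in>P. B \<subseteq> Z}. \<mu> B) = \<mu> Z"
proof -
  have "Z = \<Union>{B\<in>P. B \<subseteq> Z}"
  proof
    show "Z \<subseteq> \<Union>{B\<in>P. B \<subseteq> Z}"
    proof
      fix x assume "x \<in> Z"
      then obtain B where "B \<in> P" "x \<in> B"
        using assms(3) fin_partitionD(4)[OF assms(1)] by blast
      moreover have "B \<subseteq> Z"
        using assms(2) \<open>B \<in> P\<close> \<open>x \<in> B\<close> \<open>x \<in> Z\<close> unfolding resolves_def by blast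
      ultimately show "x \<in> \<Union>{B\<in>P. B \<subseteq> Z}"
        by blast
    qed
  qed blast
  moreover have "\<mu> (\<Union>{B\<in>P. B \<subseteq> Z}) = (\<Sum>B\<in>{B\<in>P. B \<subseteq> Z}. \<mu> B)"
    using fin_partitionD(1-3)[OF assms(1)]
    by (intro finitely_additive_sets) (auto intro: pairwise_subset)
  ultimately show ?thesis
    by simp
qed

lemma riemann_sum_ge_of_level_sets:
  assumes g: "\<forall>u\<in>S. \<bar>g u\<bar> \<le> 1" and "0 \<le> \<gamma>"
    and F: "F \<subseteq> S" "\<forall>u\<in>F. \<gamma> \<le> g u" and G: "G \<subseteq> S" "\<forall>u\<in>G. g u \<le> - \<gamma>"
    and P: "fin_partition P S" "\<forall>B\<in>P. t B \<in> B" "resolves P F" "resolves P G"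
  shows "2 * \<gamma> * (\<mu> F - \<mu> G) - total_variation \<mu> S \<le> riemann_sum \<mu> g P t"
proof -
  define c :: "'b set \<Rightarrow> real" where "c B = (if B \<subseteq> F then 1 else 0) - (if B \<subseteq> G then 1 else 0)" for B
  have "(\<Sum>B\<in>P. c B * \<mu> B) = (\<Sum>B\<in>P. (if B \<subseteq> F then \<mu> B else 0) - (if B \<subseteq> G then \<mu> B else 0))"
    by (rule sum.cong) (simp_all add: c_def left_diff_distrib)
  also have "\<dots> = (\<Sum>B\<in>{B\<in>P. B \<subseteq> F}. \<mu> B) - (\<Sum>B\<in>{B\<in>P. B \<subseteq> G}. \<mu> B)"
    using fin_partitionD(1)[OF P(1)] by (simp add: sum_subtractf sum.inter_filter)
  also have "\<dots> = \<mu> F - \<mu> G"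
    using P(1,3,4) F(1) G(1) by (simp add: sum_blocks_inside)
  finally have "2 * \<gamma> * (\<mu> F - \<mu> G) - total_variation \<mu> S
      \<le> (\<Sum>B\<in>P. 2 * \<gamma> * (c B * \<mu> B) - \<bar>\<mu> B\<bar>)"
    using sum_abs_partition_le[OF P(1)] by (simp add: sum_subtractf flip: sum_distrib_left)
  also have "\<dots> \<le> riemann_sum \<mu> g P t"
    unfolding riemann_sum_def
  proof (rule sum_mono)
    fix B assume "B \<in> P"
    then have "t B \<in> B" "t B \<in> S"
      using P(2) fin_partitionD(2)[OF P(1)] by blast+
    then show "2 * \<gamma> * (c B * \<mu> B) - \<bar>\<mu> B\<bar> \<le> g (t B) * \<mu> B"
      unfolding c_def using g F(2) G(2) \<open>0 \<le> \<gamma>\<close> by (intro block_lower_bound) blast+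
  qed
  finally show ?thesis .
qed

lemma ba_integral_ge_of_level_sets:
  assumes g: "\<forall>u\<in>S. \<bar>g u\<bar> \<le> 1" and "0 \<le> \<gamma>"
    and F: "F \<subseteq> S" "\<forall>u\<in>F. \<gamma> \<le> g u" and G: "G \<subseteq> S" "\<forall>u\<in>G. g u \<le> - \<gamma>"
  shows "2 * \<gamma> * (\<mu> F - \<mu> G) - total_variation \<mu> S \<le> ba_integral S \<mu> g"
proof (rule ba_integral_ge[of _ "{F, G}"])
  show "bounded (g ` S)"
    using g unfolding bounded_real by blast
  fix P t assume "fin_partition P S" "\<forall>B\<in>P. t B \<in> B" "\<forall>Z\<in>{F, G}. resolves P Z"
  then show "2 * \<gamma> * (\<mu> F - \<mu> G) - total_variation \<mu> S \<le> riemann_sum \<mu> g P t"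
    using assms by (intro riemann_sum_ge_of_level_sets) simp_all
qed simp

lemma riemann_sum_le_of_level_sets:
  assumes g: "\<forall>u\<in>S. \<bar>g u\<bar> \<le> 1" and \<gamma>: "0 < \<gamma>" "\<gamma> \<le> 1"
  defines "A \<equiv> {u\<in>S. \<gamma> \<le> g u}" and "N \<equiv> {u\<in>S. g u \<le> - \<gamma>}"
  assumes P: "fin_partition P S" "\<forall>B\<in>P. t B \<in> B" "resolves P A" "resolves P N"
  shows "riemann_sum \<mu> g P t \<le> \<gamma> * total_variation \<mu> S + (1 - \<gamma>) * (pos_part \<mu> A + neg_part \<mu> N)"
proof -
  define p where "p B = (if B \<subseteq> A then max (\<mu> B) 0 else 0) + (if B \<subseteq> N then max (- \<mu> B) 0 else 0)"
    for B
  have "riemann_sum \<mu> g P t \<le> (\<Sum>B\<in>P. \<gamma> * \<bar>\<mu> B\<bar> + (1 - \<gamma>) * p B)"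
    unfolding riemann_sum_def
  proof (rule sum_mono)
    fix B assume "B \<in> P"
    then have "t B \<in> B" "t B \<in> S"
      using P(2) fin_partitionD(2)[OF P(1)] by blast+
    then have "B \<subseteq> A \<longleftrightarrow> \<gamma> \<le> g (t B)" "B \<subseteq> N \<longleftrightarrow> g (t B) \<le> - \<gamma>"
      using resolves_iff_tag_in[OF P(3) \<open>B \<in> P\<close>] resolves_iff_tag_in[OF P(4) \<open>B \<in> P\<close>]
      unfolding A_def N_def by blast+
    then show "g (t B) * \<mu> B \<le> \<gamma> * \<bar>\<mu> B\<bar> + (1 - \<gamma>) * p B"
      unfolding p_def using g \<open>t B \<in> S\<close> \<gamma> by (simp add: block_upper_bound)
  qed
  also have "\<dots> = \<gamma> * (\<Sum>B\<in>P. \<bar>\<mu> B\<bar>)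
      + (1 - \<gamma>) * ((\<Sum>B\<in>{B\<in>P. B \<subseteq> A}. max (\<mu> B) 0) + (\<Sum>B\<in>{B\<in>P. B \<subseteq> N}. max (- \<mu> B) 0))"
    using fin_partitionD(1)[OF P(1)]
    by (simp add: p_def sum.distrib sum.inter_filter flip: sum_distrib_left)
  also have "\<dots> \<le> \<gamma> * total_variation \<mu> S + (1 - \<gamma>) * (pos_part \<mu> A + neg_part \<mu> N)"
  proof (intro add_mono mult_left_mono)
    show "(\<Sum>B\<in>P. \<bar>\<mu> B\<bar>) \<le> total_variation \<mu> S"
      by (rule sum_abs_partition_le[OF P(1)])
    have "finite {B\<in>P. B \<subseteq> Z}" "disjoint {B\<in>P. B \<subseteq> Z}" "{B\<in>P. B \<subseteq> Z} \<subseteq> Pow Z" for Z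
      using fin_partitionD(1,3)[OF P(1)] by (auto intro: pairwise_subset)
    moreover have "A \<subseteq> S" "N \<subseteq> S"
      unfolding A_def N_def by blast+
    ultimately show "(\<Sum>B\<in>{B\<in>P. B \<subseteq> A}. max (\<mu> B) 0) \<le> pos_part \<mu> A"
      "(\<Sum>B\<in>{B\<in>P. B \<subseteq> N}. max (- \<mu> B) 0) \<le> neg_part \<mu> N"
      by (intro sum_max_le_pos_part sum_max_le_neg_part; blast)+
  qed (use \<gamma> in simp_all)
  finally show ?thesis .
qed

lemma ba_integral_le_of_level_sets:
  assumes g: "\<forall>u\<in>S. \<bar>g u\<bar> \<le> 1" and "0 < \<gamma>" "\<gamma> \<le> 1"
  shows "ba_integral S \<mu> g \<le> \<gamma> * total_variation \<mu> S
    + (1 - \<gamma>) * (pos_part \<mu> {u\<in>S. \<gamma> \<le> g u} + neg_part \<mu> {u\<in>S. g u \<le> - \<gamma>})"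
proof (rule ba_integral_le[of _ "{{u\<in>S. \<gamma> \<le> g u}, {u\<in>S. g u \<le> - \<gamma>}}"])
  show "bounded (g ` S)"
    using g unfolding bounded_real by blast
  fix P t
  assume "fin_partition P S" "\<forall>B\<in>P. t B \<in> B" "\<forall>Z\<in>{{u\<in>S. \<gamma> \<le> g u}, {u\<in>S. g u \<le> - \<gamma>}}. resolves P Z"
  then show "riemann_sum \<mu> g P t \<le> \<gamma> * total_variation \<mu> S
      + (1 - \<gamma>) * (pos_part \<mu> {u\<in>S. \<gamma> \<le> g u} + neg_part \<mu> {u\<in>S. g u \<le> - \<gamma>})"
    using assms by (intro riemann_sum_le_of_level_sets) simp_all
qed simp

end

lemma abs_deLeeuw_le: "f \<in> Lip0_ball z0 \<Longrightarrow> \<bar>deLeeuw f p\<bar> \<le> 1"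
  by (cases p) (simp add: deLeeuw_def Lip0_ball_def abs_divide divide_le_eq_1)

lemma deLeeuw_flip_pair: "deLeeuw f (flip_pair p) = - deLeeuw f p"
  by (cases p) (simp add: deLeeuw_def flip_pair_def dist_commute minus_divide_left)

lemma deLeeuw_uminus: "deLeeuw (\<lambda>x. - f x) p = - deLeeuw f p"
  by (cases p) (simp add: deLeeuw_def minus_divide_left)

lemma uminus_in_Lip0_ball: "f \<in> Lip0_ball z0 \<Longrightarrow> (\<lambda>x. - f x) \<in> Lip0_ball z0"
  unfolding Lip0_ball_def by (simp add: abs_minus_commute)

lemma zero_in_Lip0_ball: "(\<lambda>_. 0) \<in> Lip0_ball z0"
  unfolding Lip0_ball_def by simp

lemma flip_pair_flip_pair [simp]: "flip_pair (flip_pair p) = p"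
  by (cases p) (simp add: flip_pair_def)

lemma flip_pair_in_Mtilde_iff [simp]: "flip_pair p \<in> Mtilde \<longleftrightarrow> p \<in> Mtilde"
  by (cases p) (auto simp: flip_pair_def Mtilde_def)

lemma flip_pair_superlevel_set:
  "flip_pair ` {p\<in>Mtilde. \<gamma> \<le> deLeeuw f p} = {p\<in>Mtilde. deLeeuw f p \<le> - \<gamma>}"
proof
  show "flip_pair ` {p\<in>Mtilde. \<gamma> \<le> deLeeuw f p} \<subseteq> {p\<in>Mtilde. deLeeuw f p \<le> - \<gamma>}"
    by (auto simp: deLeeuw_flip_pair)
  show "{p\<in>Mtilde. deLeeuw f p \<le> - \<gamma>} \<subseteq> flip_pair ` {p\<in>Mtilde. \<gamma> \<le> deLeeuw f p}"
  proof
    fix p assume "p \<in> {p\<in>Mtilde. deLeeuw f p \<le> - \<gamma>}"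
    then have "flip_pair p \<in> {p\<in>Mtilde. \<gamma> \<le> deLeeuw f p}"
      by (simp add: deLeeuw_flip_pair)
    then show "p \<in> flip_pair ` {p\<in>Mtilde. \<gamma> \<le> deLeeuw f p}"
      by (metis flip_pair_flip_pair image_eqI)
  qed
qed

locale pair_charge = bounded_charge Mtilde \<mu> for \<mu> :: "('a::metric_space \<times> 'a) set \<Rightarrow> real"
begin

lemma abs_integral_deLeeuw_le_total_variation:
  "f \<in> Lip0_ball z0 \<Longrightarrow> \<bar>ba_integral Mtilde \<mu> (deLeeuw f)\<bar> \<le> total_variation \<mu> Mtilde"
  using abs_deLeeuw_le by (blast intro: abs_ba_integral_le)

lemma dual_norm_set_bdd: "bdd_above {\<bar>ba_integral Mtilde \<mu> (deLeeuw f)\<bar> | f. f \<in> Lip0_ball z0}"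
  using abs_integral_deLeeuw_le_total_variation by (intro bdd_aboveI) blast

lemma abs_integral_deLeeuw_le_dual_norm:
  "f \<in> Lip0_ball z0 \<Longrightarrow> \<bar>ba_integral Mtilde \<mu> (deLeeuw f)\<bar> \<le> dual_norm_Phi_star z0 \<mu>"
  unfolding dual_norm_Phi_star_def by (rule cSup_upper[OF _ dual_norm_set_bdd]) blast

lemma dual_norm_le_ba_norm: "dual_norm_Phi_star z0 \<mu> \<le> ba_norm Mtilde \<mu>"
  unfolding dual_norm_Phi_star_def ba_norm_def
  using zero_in_Lip0_ball abs_integral_deLeeuw_le_total_variation by (intro cSup_least) blast+

lemma dual_norm_approx:
  assumes "0 < \<epsilon>"
  obtains f where "f \<in> Lip0_ball z0" "dual_norm_Phi_star z0 \<mu> - \<epsilon> < ba_integral Mtilde \<mu> (deLeeuw f)"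
proof -
  have "dual_norm_Phi_star z0 \<mu> - \<epsilon> < Sup {\<bar>ba_integral Mtilde \<mu> (deLeeuw f)\<bar> | f. f \<in> Lip0_ball z0}"
    using assms unfolding dual_norm_Phi_star_def by simp
  then obtain f where f: "f \<in> Lip0_ball z0"
    and less: "dual_norm_Phi_star z0 \<mu> - \<epsilon> < \<bar>ba_integral Mtilde \<mu> (deLeeuw f)\<bar>"
    using zero_in_Lip0_ball by (subst (asm) less_cSup_iff[OF _ dual_norm_set_bdd]) blast+
  have "bounded (deLeeuw f ` Mtilde)"
    using abs_deLeeuw_le[OF f] unfolding bounded_real by blast
  then have "ba_integral Mtilde \<mu> (deLeeuw (\<lambda>x. - f x)) = - ba_integral Mtilde \<mu> (deLeeuw f)"
    unfolding deLeeuw_uminus by (rule ba_integral_uminus)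
  then show ?thesis
    using that[OF f] that[OF uminus_in_Lip0_ball[OF f]] less by (cases "0 \<le> ba_integral Mtilde \<mu> (deLeeuw f)") auto
qed

end

section \<open>Cyclic monotonicity\<close>

lemma sum_lessThan_rotate:
  fixes h :: "nat \<Rightarrow> 'b::comm_monoid_add"
  assumes "1 \<le> n"
  shows "(\<Sum>i<n. h ((i + 1) mod n)) = (\<Sum>i<n. h i)"
proof -
  obtain m where m: "n = Suc m"
    using assms by (cases n) auto
  have "(\<Sum>i<Suc m. h ((i + 1) mod Suc m)) = (\<Sum>i<m. h ((i + 1) mod Suc m)) + h 0"
    by simp
  also have "(\<Sum>i<m. h ((i + 1) mod Suc m)) = (\<Sum>i<m. h (Suc i))"
    by (rule sum.cong) simp_all
  also have "(\<Sum>i<m. h (Suc i)) + h 0 = (\<Sum>i<Suc m. h i)"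
    by (simp only: sum.lessThan_Suc_shift add.commute)
  finally show ?thesis
    unfolding m .
qed

lemma cyc_monotone_if_deLeeuw_ge:
  assumes "A \<subseteq> Mtilde" "f \<in> Lip0_ball z0" "\<forall>(x, y)\<in>A. \<gamma> \<le> deLeeuw f (x, y)"
  shows "cyc_monotone \<gamma> A"
  unfolding cyc_monotone_def
proof (intro conjI assms(1) allI impI)
  fix n :: nat and x y :: "nat \<Rightarrow> 'a"
  assume n: "1 \<le> n" and xy: "\<forall>i<n. (x i, y i) \<in> A"
  have lip: "\<bar>f u - f v\<bar> \<le> dist u v" for u v
    using assms(2) unfolding Lip0_ball_def by blast
  have "f (y i) - f (y ((i + 1) mod n))
      \<le> min (dist (x i) (y ((i + 1) mod n)) - \<gamma> * dist (x i) (y i)) (dist (y i) (y ((i + 1) mod n)))"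
    if "i < n" for i
  proof -
    have "(x i, y i) \<in> A"
      using xy that by blast
    then have "x i \<noteq> y i" "\<gamma> \<le> (f (x i) - f (y i)) / dist (x i) (y i)"
      using assms(1,3) unfolding Mtilde_def deLeeuw_def by auto
    then have "\<gamma> * dist (x i) (y i) \<le> f (x i) - f (y i)"
      by (simp add: le_divide_eq)
    then show ?thesis
      using lip[of "x i" "y ((i + 1) mod n)"] lip[of "y i" "y ((i + 1) mod n)"]
      unfolding abs_le_iff by linarith
  qed
  then have "(\<Sum>i<n. f (y i) - f (y ((i + 1) mod n)))
      \<le> (\<Sum>i<n. min (dist (x i) (y ((i + 1) mod n)) - \<gamma> * dist (x i) (y i)) (dist (y i) (y ((i + 1) mod n))))"
    by (intro sum_mono) simp
  moreover have "(\<Sum>i<n. f (y i) - f (y ((i + 1) mod n))) = 0"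
    using sum_lessThan_rotate[OF n, of "\<lambda>i. f (y i)"] by (simp add: sum_subtractf)
  ultimately show "0 \<le> (\<Sum>i<n. min (dist (x i) (y ((i + 1) mod n)) - \<gamma> * dist (x i) (y i))
      (dist (y i) (y ((i + 1) mod n))))"
    by simp
qed

definition chain_step :: "real \<Rightarrow> (nat \<Rightarrow> 'a::metric_space) \<Rightarrow> (nat \<Rightarrow> 'a) \<Rightarrow> nat \<Rightarrow> real" where
  "chain_step \<gamma> x y i = min (dist (x i) (y (Suc i)) - \<gamma> * dist (x i) (y i)) (dist (y i) (y (Suc i)))"

definition chain_cost :: "real \<Rightarrow> 'a::metric_space \<Rightarrow> 'a \<Rightarrow> nat \<Rightarrow> (nat \<Rightarrow> 'a) \<Rightarrow> (nat \<Rightarrow> 'a) \<Rightarrow> real" where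
  "chain_cost \<gamma> z0 p n x y = dist p (y 0) + (\<Sum>i<n - 1. chain_step \<gamma> x y i) + dist (y (n - 1)) z0"

definition chain_potential :: "real \<Rightarrow> ('a::metric_space \<times> 'a) set \<Rightarrow> 'a \<Rightarrow> 'a \<Rightarrow> real" where
  "chain_potential \<gamma> A z0 p =
     Inf {chain_cost \<gamma> z0 p n x y | n x y. 1 \<le> n \<and> (\<forall>i<n. (x i, y i) \<in> A)}"

lemma chain_cost_ge:
  assumes "cyc_monotone \<gamma> A" "1 \<le> n" "\<forall>i<n. (x i, y i) \<in> A"
  shows "- dist p z0 \<le> chain_cost \<gamma> z0 p n x y"
proof -
  obtain m where m: "n = Suc m"
    using assms(2) by (cases n) auto
  define T where "T i = min (dist (x i) (y ((i + 1) mod n)) - \<gamma> * dist (x i) (y i))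
      (dist (y i) (y ((i + 1) mod n)))" for i
  have "(\<Sum>i<m. T i) = (\<Sum>i<m. chain_step \<gamma> x y i)"
    unfolding T_def chain_step_def m by (rule sum.cong) simp_all
  moreover have "T m \<le> dist (y m) (y 0)"
    unfolding T_def m by simp
  moreover have "0 \<le> (\<Sum>i<n. T i)"
    using assms unfolding cyc_monotone_def T_def by blast
  ultimately have "0 \<le> (\<Sum>i<m. chain_step \<gamma> x y i) + dist (y m) (y 0)"
    unfolding m by simp
  also have "dist (y m) (y 0) \<le> dist (y m) z0 + dist p z0 + dist p (y 0)"
    using dist_triangle[of "y m" "y 0" z0] dist_triangle[of z0 "y 0" p] by (simp add: dist_commute)
  finally show ?thesis
    unfolding chain_cost_def m by simp
qed

context
  fixes \<gamma> :: real and A :: "('a::metric_space \<times> 'a) set" and z :: 'a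
  assumes cyc: "cyc_monotone \<gamma> A" and nonempty: "A \<noteq> {}"
begin

private abbreviation chain_costs :: "'a \<Rightarrow> real set" where
  "chain_costs p \<equiv> {chain_cost \<gamma> z p n x y | n x y. 1 \<le> n \<and> (\<forall>i<n. (x i, y i) \<in> A)}"

lemma chain_potential_le:
  assumes "1 \<le> n" "\<forall>i<n. (x i, y i) \<in> A"
  shows "chain_potential \<gamma> A z p \<le> chain_cost \<gamma> z p n x y"
  unfolding chain_potential_def
proof (rule cInf_lower)
  show "chain_cost \<gamma> z p n x y \<in> chain_costs p"
    using assms by blast
  show "bdd_below (chain_costs p)"
    using chain_cost_ge[OF cyc] by (intro bdd_belowI[of _ "- dist p z"]) blast
qed

lemma chain_costs_nonempty: "chain_costs p \<noteq> {}"
proof -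
  obtain a b where "(a, b) \<in> A"
    using nonempty by auto
  then have "chain_cost \<gamma> z p 1 (\<lambda>_. a) (\<lambda>_. b) \<in> chain_costs p"
    by force
  then show ?thesis
    by blast
qed

lemma chain_potential_lipschitz: "chain_potential \<gamma> A z p \<le> chain_potential \<gamma> A z q + dist p q"
proof -
  have "chain_potential \<gamma> A z p - dist p q \<le> chain_potential \<gamma> A z q"
    unfolding chain_potential_def[of _ _ _ q]
  proof (rule cInf_greatest[OF chain_costs_nonempty])
    fix c assume "c \<in> chain_costs q"
    then obtain n x y where c: "c = chain_cost \<gamma> z q n x y" and xy: "1 \<le> n" "\<forall>i<n. (x i, y i) \<in> A"
      by blast
    have "chain_cost \<gamma> z p n x y \<le> c + dist p q"
      using dist_triangle[of p "y 0" q] unfolding c chain_cost_def by simp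
    then show "chain_potential \<gamma> A z p - dist p q \<le> c"
      using chain_potential_le[OF xy, of p] by simp
  qed
  then show ?thesis
    by simp
qed

lemma chain_potential_decrease:
  assumes "(a, b) \<in> A"
  shows "chain_potential \<gamma> A z b + \<gamma> * dist a b \<le> chain_potential \<gamma> A z a"
  unfolding chain_potential_def[of _ _ _ a]
proof (rule cInf_greatest[OF chain_costs_nonempty])
  fix c assume "c \<in> chain_costs a"
  then obtain n x y where c: "c = chain_cost \<gamma> z a n x y" and xy: "1 \<le> n" "\<forall>i<n. (x i, y i) \<in> A"
    by blast
  obtain m where m: "n = Suc m"
    using xy(1) by (cases n) auto
  define x' where "x' i = (if i = 0 then a else x (i - 1))" for i
  define y' where "y' i = (if i = 0 then b else y (i - 1))" for i
  have "\<forall>i<Suc n. (x' i, y' i) \<in> A"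
    using xy(2) assms unfolding x'_def y'_def by (auto simp: less_Suc_eq_0_disj)
  then have "chain_potential \<gamma> A z b \<le> chain_cost \<gamma> z b (Suc n) x' y'"
    by (intro chain_potential_le) simp_all
  also have "\<dots> = chain_step \<gamma> x' y' 0 + (\<Sum>i<m. chain_step \<gamma> x y i) + dist (y m) z"
  proof -
    have "chain_step \<gamma> x' y' (Suc i) = chain_step \<gamma> x y i" for i
      by (simp add: chain_step_def x'_def y'_def)
    then show ?thesis
      unfolding chain_cost_def m by (simp add: sum.lessThan_Suc_shift y'_def del: sum.lessThan_Suc)
  qed
  also have "chain_step \<gamma> x' y' 0 \<le> dist a (y 0) - \<gamma> * dist a b"
    by (simp add: chain_step_def x'_def y'_def)
  finally show "chain_potential \<gamma> A z b + \<gamma> * dist a b \<le> c"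
    unfolding c chain_cost_def m by simp
qed

end

lemma exists_deLeeuw_ge_if_cyc_monotone:
  assumes "cyc_monotone \<gamma> A"
  obtains f where "f \<in> Lip0_ball z0" "\<forall>(x, y)\<in>A. \<gamma> \<le> deLeeuw f (x, y)"
proof (cases "A = {}")
  case True
  then show ?thesis
    using that zero_in_Lip0_ball by blast
next
  case False
  define f where "f p = chain_potential \<gamma> A z0 p - chain_potential \<gamma> A z0 z0" for p
  have "f \<in> Lip0_ball z0"
  proof -
    have lip: "chain_potential \<gamma> A z0 p \<le> chain_potential \<gamma> A z0 q + dist p q" for p q
      by (rule chain_potential_lipschitz[OF assms False, where z = z0])
    show ?thesis
      unfolding Lip0_ball_def f_def
    proof (intro CollectI conjI allI)
      fix u v
      show "\<bar>chain_potential \<gamma> A z0 u - chain_potential \<gamma> A z0 z0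
          - (chain_potential \<gamma> A z0 v - chain_potential \<gamma> A z0 z0)\<bar> \<le> dist u v"
        using lip[of u v] lip[of v u] by (simp add: abs_le_iff dist_commute)
    qed simp
  qed
  moreover have "\<gamma> \<le> deLeeuw f (a, b)" if "(a, b) \<in> A" for a b
  proof -
    have "a \<noteq> b"
      using that assms unfolding cyc_monotone_def Mtilde_def by blast
    then show ?thesis
      using chain_potential_decrease[OF assms False that, where z = z0]
      unfolding deLeeuw_def f_def by (simp add: le_divide_eq)
  qed
  ultimately show ?thesis
    using that by blast
qed

section \<open>Norm attainment\<close>

context pair_charge
begin

lemma integral_deLeeuw_ge:
  assumes "0 < \<gamma>" "A \<subseteq> Mtilde" "f \<in> Lip0_ball z0" "\<forall>(x, y)\<in>A. \<gamma> \<le> deLeeuw f (x, y)"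
  shows "2 * \<gamma> * (pos_part \<mu> A + neg_part \<mu> (flip_pair ` A)) - total_variation \<mu> Mtilde
    \<le> ba_integral Mtilde \<mu> (deLeeuw f)"
proof -
  let ?I = "ba_integral Mtilde \<mu> (deLeeuw f)"
  have "pos_part \<mu> A + neg_part \<mu> (flip_pair ` A) \<le> (?I + total_variation \<mu> Mtilde) / (2 * \<gamma>)"
  proof (rule pos_part_add_neg_part_le)
    fix F G assume FG: "F \<subseteq> A" "G \<subseteq> flip_pair ` A"
    have ge: "\<forall>p\<in>A. \<gamma> \<le> deLeeuw f p"
      using assms(4) by auto
    have "flip_pair ` A \<subseteq> Mtilde"
      using assms(2) by auto
    then have "F \<subseteq> Mtilde" "G \<subseteq> Mtilde"
      using FG assms(2) by blast+
    moreover have "\<forall>p\<in>F. \<gamma> \<le> deLeeuw f p" "\<forall>p\<in>G. deLeeuw f p \<le> - \<gamma>"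
      using FG ge by (auto simp: deLeeuw_flip_pair)
    moreover have "\<forall>p\<in>Mtilde. \<bar>deLeeuw f p\<bar> \<le> 1"
      using abs_deLeeuw_le[OF assms(3)] by blast
    ultimately have "2 * \<gamma> * (\<mu> F - \<mu> G) - total_variation \<mu> Mtilde \<le> ?I"
      using assms(1) by (intro ba_integral_ge_of_level_sets) simp_all
    then show "\<mu> F - \<mu> G \<le> (?I + total_variation \<mu> Mtilde) / (2 * \<gamma>)"
      using assms(1) by (simp add: field_simps)
  qed
  then show ?thesis
    using assms(1) by (simp add: field_simps)
qed

lemma integral_deLeeuw_le:
  assumes "0 < \<gamma>" "\<gamma> \<le> 1" "f \<in> Lip0_ball z0"
  defines "A \<equiv> {p\<in>Mtilde. \<gamma> \<le> deLeeuw f p}"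
  shows "ba_integral Mtilde \<mu> (deLeeuw f)
    \<le> \<gamma> * total_variation \<mu> Mtilde + (1 - \<gamma>) * (pos_part \<mu> A + neg_part \<mu> (flip_pair ` A))"
proof -
  have "\<forall>p\<in>Mtilde. \<bar>deLeeuw f p\<bar> \<le> 1"
    using abs_deLeeuw_le[OF assms(3)] by blast
  then show ?thesis
    unfolding A_def flip_pair_superlevel_set by (rule ba_integral_le_of_level_sets[OF _ assms(1,2)])
qed

lemma dual_norm_eq_ba_norm_if_norming_sets:
  assumes "\<forall>\<gamma>. 0 < \<gamma> \<and> \<gamma> < 1 \<longrightarrow> (\<exists>A f. A \<subseteq> Mtilde \<and> f \<in> Lip0_ball z0 \<and>
    pos_part \<mu> A + neg_part \<mu> (flip_pair ` A) \<ge> \<gamma> * total_variation \<mu> Mtilde \<and>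
    (\<forall>(x, y)\<in>A. deLeeuw f (x, y) \<ge> \<gamma>))"
  shows "dual_norm_Phi_star z0 \<mu> = ba_norm Mtilde \<mu>"
proof (rule antisym[OF dual_norm_le_ba_norm])
  let ?V = "total_variation \<mu> Mtilde"
  have "(2 * \<gamma>\<^sup>2 - 1) * ?V \<le> dual_norm_Phi_star z0 \<mu>" if \<gamma>: "0 < \<gamma>" "\<gamma> < 1" for \<gamma>
  proof -
    obtain A f where A: "A \<subseteq> Mtilde" "f \<in> Lip0_ball z0" "\<forall>(x, y)\<in>A. \<gamma> \<le> deLeeuw f (x, y)"
      and large: "\<gamma> * ?V \<le> pos_part \<mu> A + neg_part \<mu> (flip_pair ` A)"
      using assms[rule_format, OF conjI[OF \<gamma>]] by blast
    have "(2 * \<gamma>\<^sup>2 - 1) * ?V \<le> 2 * \<gamma> * (pos_part \<mu> A + neg_part \<mu> (flip_pair ` A)) - ?V"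
      using mult_left_mono[OF large, of "2 * \<gamma>"] \<gamma> by (simp add: power2_eq_square algebra_simps)
    also have "\<dots> \<le> ba_integral Mtilde \<mu> (deLeeuw f)"
      using integral_deLeeuw_ge[OF \<gamma>(1) A] .
    also have "\<dots> \<le> dual_norm_Phi_star z0 \<mu>"
      using abs_integral_deLeeuw_le_dual_norm[OF A(2)] by simp
    finally show ?thesis .
  qed
  moreover have "((\<lambda>\<gamma>. (2 * \<gamma>\<^sup>2 - 1) * ?V) \<longlongrightarrow> ?V) (at_left 1)"
    by (auto intro!: tendsto_eq_intros)
  ultimately show "ba_norm Mtilde \<mu> \<le> dual_norm_Phi_star z0 \<mu>"
    unfolding ba_norm_def using eventually_at_left_real[of 0 1]
    by (intro tendsto_upperbound) (auto elim: eventually_mono)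
qed

lemma norming_sets_if_dual_norm_eq_ba_norm:
  assumes "dual_norm_Phi_star z0 \<mu> = ba_norm Mtilde \<mu>" "0 < \<gamma>" "\<gamma> < 1"
  shows "\<exists>A f. A \<subseteq> Mtilde \<and> f \<in> Lip0_ball z0 \<and>
    pos_part \<mu> A + neg_part \<mu> (flip_pair ` A) \<ge> \<gamma> * total_variation \<mu> Mtilde \<and>
    (\<forall>(x, y)\<in>A. deLeeuw f (x, y) \<ge> \<gamma>)"
proof (cases "total_variation \<mu> Mtilde = 0")
  case True
  then show ?thesis
    using zero_in_Lip0_ball pos_part_nonneg[of "{}"] neg_part_nonneg[of "{}"] by fastforce
next
  case False
  let ?V = "total_variation \<mu> Mtilde"
  have "0 < (1 - \<gamma>)\<^sup>2 * ?V"
    using False total_variation_nonneg assms(3) by simp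
  then obtain f where f: "f \<in> Lip0_ball z0" "?V - (1 - \<gamma>)\<^sup>2 * ?V < ba_integral Mtilde \<mu> (deLeeuw f)"
    using dual_norm_approx assms(1) unfolding ba_norm_def by metis
  define A where "A = {p\<in>Mtilde. \<gamma> \<le> deLeeuw f p}"
  let ?s = "pos_part \<mu> A + neg_part \<mu> (flip_pair ` A)"
  have "ba_integral Mtilde \<mu> (deLeeuw f) \<le> \<gamma> * ?V + (1 - \<gamma>) * ?s"
    unfolding A_def using assms(2,3) f(1) by (intro integral_deLeeuw_le) simp_all
  moreover have "(1 - \<gamma>) * (\<gamma> * ?V) = ?V - (1 - \<gamma>)\<^sup>2 * ?V - \<gamma> * ?V"
    by (simp add: power2_eq_square algebra_simps)
  ultimately have "(1 - \<gamma>) * (\<gamma> * ?V) \<le> (1 - \<gamma>) * ?s"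
    using f(2) by linarith
  then have "\<gamma> * ?V \<le> ?s"
    using assms(3) by simp
  moreover have "A \<subseteq> Mtilde" "\<forall>(x, y)\<in>A. \<gamma> \<le> deLeeuw f (x, y)"
    unfolding A_def by auto
  ultimately show ?thesis
    using f(1) by blast
qed

end

theorem theorem2p3:
  fixes z0 :: "'a::metric_space"
    and \<mu> :: "('a \<times> 'a) set \<Rightarrow> real"
  assumes "ba_measure Mtilde \<mu>"
  shows "(dual_norm_Phi_star z0 \<mu> = ba_norm Mtilde \<mu>
           \<longleftrightarrow> (\<forall>\<gamma>. 0 < \<gamma> \<and> \<gamma> < 1 \<longrightarrow>
                  (\<exists>A f. A \<subseteq> Mtilde \<and> f \<in> Lip0_ball z0 \<and>
                     pos_part \<mu> A + neg_part \<mu> (flip_pair ` A) \<ge> \<gamma> * total_variation \<mu> Mtilde \<and>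
                     (\<forall>(x, y)\<in>A. deLeeuw f (x, y) \<ge> \<gamma>))))
       \<and> (dual_norm_Phi_star z0 \<mu> = ba_norm Mtilde \<mu>
           \<longleftrightarrow> (\<forall>\<gamma>. 0 < \<gamma> \<and> \<gamma> < 1 \<longrightarrow>
                  (\<exists>A. A \<subseteq> Mtilde \<and> cyc_monotone \<gamma> A \<and>
                     pos_part \<mu> A + neg_part \<mu> (flip_pair ` A) \<ge> \<gamma> * total_variation \<mu> Mtilde)))"
proof -
  interpret pair_charge \<mu>
    using assms by unfold_locales
  have witness_iff_cyc_monotone: "(\<exists>f. f \<in> Lip0_ball z0 \<and> (\<forall>(x, y)\<in>A. deLeeuw f (x, y) \<ge> \<gamma>))
      \<longleftrightarrow> cyc_monotone \<gamma> A" if "A \<subseteq> Mtilde" for A and \<gamma> :: real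
    using cyc_monotone_if_deLeeuw_ge[OF that] exists_deLeeuw_ge_if_cyc_monotone by blast
  have cyc_iff: "(\<exists>A f. A \<subseteq> Mtilde \<and> f \<in> Lip0_ball z0 \<and> P A \<and> (\<forall>(x, y)\<in>A. deLeeuw f (x, y) \<ge> \<gamma>))
      \<longleftrightarrow> (\<exists>A. A \<subseteq> Mtilde \<and> cyc_monotone \<gamma> A \<and> P A)" for P \<gamma>
    using witness_iff_cyc_monotone by blast
  have norming_iff: "dual_norm_Phi_star z0 \<mu> = ba_norm Mtilde \<mu>
      \<longleftrightarrow> (\<forall>\<gamma>. 0 < \<gamma> \<and> \<gamma> < 1 \<longrightarrow> (\<exists>A f. A \<subseteq> Mtilde \<and> f \<in> Lip0_ball z0 \<and>
        pos_part \<mu> A + neg_part \<mu> (flip_pair ` A) \<ge> \<gamma> * total_variation \<mu> Mtilde \<and>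
        (\<forall>(x, y)\<in>A. deLeeuw f (x, y) \<ge> \<gamma>)))"
    using dual_norm_eq_ba_norm_if_norming_sets norming_sets_if_dual_norm_eq_ba_norm by (intro iffI allI impI) blast+
  show ?thesis
    unfolding cyc_iff[symmetric] by (rule conjI[OF norming_iff norming_iff])
qed

end
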